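(* Let $M$ be a right $R$-module such that every submodule $N$ of $M$ can be written as $N=X+A$ with $X$ a cyclic submodule of $M$ and $A\ll M$. Then $M$ is principally Goldie*-lifting if and only if $M$ is Goldie*-lifting.
   Context: $R$ is an associative ring with identity; modules are unital right $R$-modules. $K\ll M$ means $K$ is small in $M$. For submodules $X,Y$ of $M$, $X\,\beta^*\,Y$ means $(X+Y)/X\ll M/X$ and $(X+Y)/Y\ll M/Y$. $M$ is Goldie*-lifting if for every submodule $X$ of $M$ there is a direct summand $D$ of $M$ with $X\,\beta^*\,D$; $M$ is principally Goldie*-lifting if this holds for every cyclic submodule $X$. *)

theory Defs
  imports "HOL-Algebra.Algebra"
begin

text \<open>The additive group of the module is represented by a commutative group M
  (HOL-Algebra monoid record, whose operation is the module addition);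
  sm is the right scalar multiplication x r.\<close>

definition right_module ::
  "('r, 'c) ring_scheme \<Rightarrow> ('b, 'd) monoid_scheme \<Rightarrow> ('b \<Rightarrow> 'r \<Rightarrow> 'b) \<Rightarrow> bool" where
  "right_module R M sm \<longleftrightarrow> ring R \<and> comm_group M \<and>
     (\<forall>x\<in>carrier M. \<forall>r\<in>carrier R. sm x r \<in> carrier M) \<and>
     (\<forall>x\<in>carrier M. \<forall>y\<in>carrier M. \<forall>r\<in>carrier R.
        sm (x \<otimes>\<^bsub>M\<^esub> y) r = sm x r \<otimes>\<^bsub>M\<^esub> sm y r) \<and>
     (\<forall>x\<in>carrier M. \<forall>r\<in>carrier R. \<forall>s\<in>carrier R.
        sm x (r \<oplus>\<^bsub>R\<^esub> s) = sm x r \<otimes>\<^bsub>M\<^esub> sm x s) \<and>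
     (\<forall>x\<in>carrier M. \<forall>r\<in>carrier R. \<forall>s\<in>carrier R.
        sm x (r \<otimes>\<^bsub>R\<^esub> s) = sm (sm x r) s) \<and>
     (\<forall>x\<in>carrier M. sm x \<one>\<^bsub>R\<^esub> = x)"

text \<open>Submodules (generic in the structure, so they can be applied to quotients).\<close>
definition submod ::
  "('r, 'c) ring_scheme \<Rightarrow> ('b, 'd) monoid_scheme \<Rightarrow> ('b \<Rightarrow> 'r \<Rightarrow> 'b) \<Rightarrow> 'b set \<Rightarrow> bool" where
  "submod R M sm N \<longleftrightarrow> subgroup N M \<and> (\<forall>x\<in>N. \<forall>r\<in>carrier R. sm x r \<in> N)"

definition small ::
  "('r, 'c) ring_scheme \<Rightarrow> ('b, 'd) monoid_scheme \<Rightarrow> ('b \<Rightarrow> 'r \<Rightarrow> 'b) \<Rightarrow> 'b set \<Rightarrow> bool" where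
  "small R M sm K \<longleftrightarrow> submod R M sm K \<and>
     (\<forall>L. submod R M sm L \<and> K <#>\<^bsub>M\<^esub> L = carrier M \<longrightarrow> L = carrier M)"

definition quot_sm ::
  "('b, 'd) monoid_scheme \<Rightarrow> 'b set \<Rightarrow> ('b \<Rightarrow> 'r \<Rightarrow> 'b) \<Rightarrow> 'b set \<Rightarrow> 'r \<Rightarrow> 'b set" where
  "quot_sm M U sm C r = (\<Union>x\<in>C. r_coset M U (sm x r))"

definition quot_image :: "('b, 'd) monoid_scheme \<Rightarrow> 'b set \<Rightarrow> 'b set \<Rightarrow> 'b set set" where
  "quot_image M U V = r_coset M U ` (U <#>\<^bsub>M\<^esub> V)"

definition beta_star ::
  "('r, 'c) ring_scheme \<Rightarrow> ('b, 'd) monoid_scheme \<Rightarrow> ('b \<Rightarrow> 'r \<Rightarrow> 'b) \<Rightarrow> 'b set \<Rightarrow> 'b set \<Rightarrow> bool" where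
  "beta_star R M sm U V \<longleftrightarrow>
     small R (M Mod U) (quot_sm M U sm) (quot_image M U V) \<and>
     small R (M Mod V) (quot_sm M V sm) (quot_image M V U)"

definition direct_summand ::
  "('r, 'c) ring_scheme \<Rightarrow> ('b, 'd) monoid_scheme \<Rightarrow> ('b \<Rightarrow> 'r \<Rightarrow> 'b) \<Rightarrow> 'b set \<Rightarrow> bool" where
  "direct_summand R M sm D \<longleftrightarrow> submod R M sm D \<and>
     (\<exists>D'. submod R M sm D' \<and> D <#>\<^bsub>M\<^esub> D' = carrier M \<and> D \<inter> D' = {\<one>\<^bsub>M\<^esub>})"

definition cyclic_submod ::
  "('r, 'c) ring_scheme \<Rightarrow> ('b, 'd) monoid_scheme \<Rightarrow> ('b \<Rightarrow> 'r \<Rightarrow> 'b) \<Rightarrow> 'b set \<Rightarrow> bool" where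
  "cyclic_submod R M sm U \<longleftrightarrow> (\<exists>m\<in>carrier M. U = (\<lambda>r. sm m r) ` carrier R)"

definition goldie_star_lifting ::
  "('r, 'c) ring_scheme \<Rightarrow> ('b, 'd) monoid_scheme \<Rightarrow> ('b \<Rightarrow> 'r \<Rightarrow> 'b) \<Rightarrow> bool" where
  "goldie_star_lifting R M sm \<longleftrightarrow>
     (\<forall>U. submod R M sm U \<longrightarrow> (\<exists>D. direct_summand R M sm D \<and> beta_star R M sm U D))"

definition principally_goldie_star_lifting ::
  "('r, 'c) ring_scheme \<Rightarrow> ('b, 'd) monoid_scheme \<Rightarrow> ('b \<Rightarrow> 'r \<Rightarrow> 'b) \<Rightarrow> bool" where
  "principally_goldie_star_lifting R M sm \<longleftrightarrow>
     (\<forall>U. cyclic_submod R M sm U \<longrightarrow> (\<exists>D. direct_summand R M sm D \<and> beta_star R M sm U D))"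

end

theory Submission
  imports Defs
begin

text \<open>By the correspondence between submodules of \<open>M/U\<close> and submodules of \<open>M\<close> containing
  \<open>U\<close>, the condition \<open>(U + V)/U \<ll> M/U\<close> says that every submodule \<open>L \<supseteq> U\<close> with
  \<open>V + L = M\<close> is all of \<open>M\<close>. In this form \<open>\<beta>*\<close> is visibly stable under adding a small
  submodule to one side: \<open>X \<beta>* D\<close> and \<open>A \<ll> M\<close> give \<open>(X + A) \<beta>* D\<close>. So if
  \<open>N = X + A\<close> with \<open>X\<close> cyclic and \<open>A\<close> small, the direct summand supplied for \<open>X\<close> also
  serves for \<open>N\<close>.\<close>

lemma (in group_hom) subgroup_vimage:
  assumes "subgroup K H"
  shows "subgroup (h -` K \<inter> carrier G) G"
proof (rule G.subgroupI)
  show "h -` K \<inter> carrier G \<noteq> {}"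
    using subgroup.one_closed[OF assms] hom_one G.one_closed by blast
next
  fix x y assume "x \<in> h -` K \<inter> carrier G" "y \<in> h -` K \<inter> carrier G"
  then show "inv x \<in> h -` K \<inter> carrier G" "x \<otimes> y \<in> h -` K \<inter> carrier G"
    using assms by (auto simp: subgroup.m_inv_closed subgroup.m_closed)
qed auto

lemma (in comm_group) set_mult_comm:
  assumes "A \<subseteq> carrier G" "B \<subseteq> carrier G"
  shows "A <#> B = B <#> A"
  using assms by (auto simp: set_mult_def) (metis m_comm subsetD)+

lemma (in group) subgroup_subset_set_mult_right:
  assumes "subgroup H G" "K \<subseteq> carrier G"
  shows "K \<subseteq> H <#> K"
  using assms subgroup.one_closed unfolding set_mult_def by force

lemma (in group) subgroup_subset_set_mult_left:
  assumes "subgroup K G" "H \<subseteq> carrier G"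
  shows "H \<subseteq> H <#> K"
  using assms subgroup.one_closed unfolding set_mult_def by force

locale rmodule = comm_group G
  for R :: "('r, 'c) ring_scheme" and G :: "('b, 'd) monoid_scheme" (structure)
    and sm :: "'b \<Rightarrow> 'r \<Rightarrow> 'b" +
  assumes right_module: "right_module R G sm"
begin

lemma smult_closed: "x \<in> carrier G \<Longrightarrow> r \<in> carrier R \<Longrightarrow> sm x r \<in> carrier G"
  using right_module by (simp add: right_module_def)

lemma smult_mult_distrib:
  "x \<in> carrier G \<Longrightarrow> y \<in> carrier G \<Longrightarrow> r \<in> carrier R \<Longrightarrow> sm (x \<otimes> y) r = sm x r \<otimes> sm y r"
  using right_module by (simp add: right_module_def)

lemma smult_add_distrib:
  "x \<in> carrier G \<Longrightarrow> r \<in> carrier R \<Longrightarrow> s \<in> carrier R \<Longrightarrow> sm x (r \<oplus>\<^bsub>R\<^esub> s) = sm x r \<otimes> sm x s"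
  using right_module by (simp add: right_module_def)

lemma smult_assoc:
  "x \<in> carrier G \<Longrightarrow> r \<in> carrier R \<Longrightarrow> s \<in> carrier R \<Longrightarrow> sm (sm x r) s = sm x (r \<otimes>\<^bsub>R\<^esub> s)"
  using right_module by (simp add: right_module_def)

lemma submod_subset: "submod R G sm N \<Longrightarrow> N \<subseteq> carrier G"
  by (simp add: submod_def subgroup.subset)

lemma submod_set_mult:
  assumes U: "submod R G sm U" and V: "submod R G sm V"
  shows "submod R G sm (U <#> V)"
  unfolding submod_def
proof
  show "subgroup (U <#> V) G"
    using U V by (simp add: submod_def mult_subgroups)
  show "\<forall>x\<in>U <#> V. \<forall>r\<in>carrier R. sm x r \<in> U <#> V"
    using U V submod_subset[OF U] submod_subset[OF V]
    by (fastforce simp: set_mult_def submod_def smult_mult_distrib)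
qed

lemma cyclic_submod_imp_submod:
  assumes "cyclic_submod R G sm C"
  shows "submod R G sm C"
proof -
  obtain m where m: "m \<in> carrier G" and C: "C = (\<lambda>r. sm m r) ` carrier R"
    using assms by (auto simp: cyclic_submod_def)
  interpret R: ring R using right_module by (simp add: right_module_def)
  interpret group_hom "add_monoid R" G "\<lambda>r. sm m r"
    by unfold_locales (auto simp: R.a_group hom_def smult_closed smult_add_distrib m)
  have "subgroup C G"
    using subgroup_img_is_subgroup[OF group.subgroup_self[OF R.a_group]] C by simp
  then show ?thesis
    using C m R.m_closed by (auto simp: submod_def smult_assoc)
qed

context
  fixes U assumes U: "submod R G sm U"
begin

lemma normal_submod: "U \<lhd> G"
  using U by (simp add: submod_def subgroup_imp_normal)

lemma quot_sm_rcos: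
  assumes c: "c \<in> carrier G" and r: "r \<in> carrier R"
  shows "quot_sm G U sm (U #> c) r = U #> sm c r"
proof -
  have sU: "subgroup U G" using U by (simp add: submod_def)
  have "U #> sm x r = U #> sm c r" if "x \<in> U #> c" for x
  proof -
    obtain u where u: "u \<in> U" "x = u \<otimes> c" using \<open>x \<in> U #> c\<close> by (auto simp: r_coset_def)
    then have "sm x r = sm u r \<otimes> sm c r"
      using submod_subset[OF U] c r by (simp add: smult_mult_distrib subsetD)
    moreover have "sm u r \<in> U" using U u r by (simp add: submod_def)
    ultimately have "sm x r \<in> U #> sm c r" by (auto simp: r_coset_def)
    then show ?thesis using repr_independence[OF _ smult_closed[OF c r] sU] by simp
  qed
  then show ?thesis
    unfolding quot_sm_def using rcos_self[OF c sU] by blast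
qed

lemma quot_image_eq_rcos_image:
  assumes "V \<subseteq> carrier G"
  shows "quot_image G U V = r_coset G U ` V"
proof -
  have sU: "subgroup U G" using U by (simp add: submod_def)
  have "U #> (u \<otimes> v) = U #> v" if "u \<in> U" "v \<in> carrier G" for u v
  proof -
    have "U #> (u \<otimes> v) = (U #> u) #> v"
      using that submod_subset[OF U] by (simp add: coset_mult_assoc subsetD)
    also have "U #> u = U"
      using that sU submod_subset[OF U] by (simp add: coset_join2 subsetD)
    finally show ?thesis .
  qed
  moreover have "V \<subseteq> U <#> V"
    using subgroup_subset_set_mult_right[OF sU assms] .
  ultimately show ?thesis
    using assms unfolding quot_image_def set_mult_def by (auto simp: subsetD)
qed

lemma rcos_image_set_mult:
  assumes "A \<subseteq> carrier G" "B \<subseteq> carrier G"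
  shows "r_coset G U ` A <#>\<^bsub>G Mod U\<^esub> r_coset G U ` B = r_coset G U ` (A <#> B)"
proof -
  have "r_coset G U ` A <#>\<^bsub>G Mod U\<^esub> r_coset G U ` B = (\<Union>a\<in>A. \<Union>b\<in>B. {(U #> a) <#> (U #> b)})"
    by (simp add: set_mult_def)
  also have "\<dots> = (\<Union>a\<in>A. \<Union>b\<in>B. {U #> (a \<otimes> b)})"
    using assms normal.rcos_sum[OF normal_submod] by (simp add: subsetD)
  also have "\<dots> = r_coset G U ` (A <#> B)"
    by (auto simp: set_mult_def)
  finally show ?thesis .
qed

lemma group_hom_rcos: "group_hom G (G Mod U) (r_coset G U)"
  using normal.factorgroup_is_group[OF normal_submod] normal.r_coset_hom_Mod[OF normal_submod]
  by (simp add: group_hom_def group_hom_axioms_def is_group)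

lemma submod_quot_image:
  assumes W: "submod R G sm W"
  shows "submod R (G Mod U) (quot_sm G U sm) (r_coset G U ` W)"
  unfolding submod_def
proof
  show "subgroup (r_coset G U ` W) (G Mod U)"
    using W group_hom.subgroup_img_is_subgroup[OF group_hom_rcos] by (simp add: submod_def)
  show "\<forall>x\<in>r_coset G U ` W. \<forall>r\<in>carrier R. quot_sm G U sm x r \<in> r_coset G U ` W"
    using W submod_subset[OF W] by (auto simp: quot_sm_rcos submod_def subsetD)
qed

lemma submod_quot_vimage:
  assumes L': "submod R (G Mod U) (quot_sm G U sm) L'"
  shows "submod R G sm (r_coset G U -` L' \<inter> carrier G)"
  unfolding submod_def
proof
  show "subgroup (r_coset G U -` L' \<inter> carrier G) G"
    using L' group_hom.subgroup_vimage[OF group_hom_rcos] by (simp add: submod_def)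
  show "\<forall>x\<in>r_coset G U -` L' \<inter> carrier G. \<forall>r\<in>carrier R. sm x r \<in> r_coset G U -` L' \<inter> carrier G"
    using L' by (auto simp: submod_def smult_closed simp flip: quot_sm_rcos)
qed

lemma subset_quot_vimage:
  assumes "subgroup L' (G Mod U)"
  shows "U \<subseteq> r_coset G U -` L' \<inter> carrier G"
  using subgroup.one_closed[OF assms] submod_subset[OF U] U
  by (auto simp: submod_def coset_join2 subsetD)

lemma image_quot_vimage:
  assumes "L' \<subseteq> carrier (G Mod U)"
  shows "r_coset G U ` (r_coset G U -` L' \<inter> carrier G) = L'"
  using assms by (auto simp: carrier_FactGroup)

lemma rcos_image_eq_carrier_iff:
  assumes K: "subgroup K G" and UK: "U \<subseteq> K"
  shows "r_coset G U ` K = carrier (G Mod U) \<longleftrightarrow> K = carrier G"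
proof
  assume img: "r_coset G U ` K = carrier (G Mod U)"
  have "x \<in> K" if x: "x \<in> carrier G" for x
  proof -
    obtain y where y: "y \<in> K" "U #> x = U #> y"
      using img x by (metis carrier_FactGroup imageE image_eqI)
    moreover have "x \<in> U #> x"
      using rcos_self[OF x] U by (simp add: submod_def)
    ultimately obtain u where "u \<in> U" "x = u \<otimes> y"
      by (auto simp: r_coset_def)
    then show "x \<in> K"
      using UK y subgroup.m_closed[OF K] by blast
  qed
  then show "K = carrier G"
    using subgroup.subset[OF K] by blast
qed (simp add: carrier_FactGroup)

lemma small_quot_image_iff:
  assumes V: "submod R G sm V"
  shows "small R (G Mod U) (quot_sm G U sm) (quot_image G U V) \<longleftrightarrow>
    (\<forall>L. submod R G sm L \<and> U \<subseteq> L \<and> V <#> L = carrier G \<longrightarrow> L = carrier G)"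
proof -
  have img: "quot_image G U V = r_coset G U ` V"
    using quot_image_eq_rcos_image[OF submod_subset[OF V]] .
  show ?thesis
    unfolding img
  proof
    assume small: "small R (G Mod U) (quot_sm G U sm) (r_coset G U ` V)"
    show "\<forall>L. submod R G sm L \<and> U \<subseteq> L \<and> V <#> L = carrier G \<longrightarrow> L = carrier G"
    proof (intro allI impI, elim conjE)
    fix L assume L: "submod R G sm L" and UL: "U \<subseteq> L" and VL: "V <#> L = carrier G"
    have "r_coset G U ` V <#>\<^bsub>G Mod U\<^esub> r_coset G U ` L = carrier (G Mod U)"
      using VL by (simp add: rcos_image_set_mult submod_subset V L carrier_FactGroup)
    then have "r_coset G U ` L = carrier (G Mod U)"
      using small submod_quot_image[OF L] by (simp add: small_def)
    then show "L = carrier G"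
      using rcos_image_eq_carrier_iff UL L by (simp add: submod_def)
    qed
  next
    assume P: "\<forall>L. submod R G sm L \<and> U \<subseteq> L \<and> V <#> L = carrier G \<longrightarrow> L = carrier G"
    show "small R (G Mod U) (quot_sm G U sm) (r_coset G U ` V)"
      unfolding small_def
    proof (intro conjI allI impI)
      show "submod R (G Mod U) (quot_sm G U sm) (r_coset G U ` V)"
        using submod_quot_image[OF V] .
    next
      fix L' assume "submod R (G Mod U) (quot_sm G U sm) L' \<and>
        r_coset G U ` V <#>\<^bsub>G Mod U\<^esub> L' = carrier (G Mod U)"
      then have L': "submod R (G Mod U) (quot_sm G U sm) L'"
        and sum: "r_coset G U ` V <#>\<^bsub>G Mod U\<^esub> L' = carrier (G Mod U)" by auto
      define L where "L = r_coset G U -` L' \<inter> carrier G"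
      have sL': "subgroup L' (G Mod U)" using L' by (simp add: submod_def)
      have L: "submod R G sm L" and UL: "U \<subseteq> L" and imgL: "r_coset G U ` L = L'"
        using submod_quot_vimage[OF L'] subset_quot_vimage[OF sL']
          image_quot_vimage[OF subgroup.subset[OF sL']] by (simp_all add: L_def)
      have VL: "submod R G sm (V <#> L)"
        using submod_set_mult[OF V L] .
      have "U \<subseteq> V <#> L"
        using UL subgroup_subset_set_mult_right[of V L] V submod_subset[OF L]
        by (auto simp: submod_def)
      moreover have "r_coset G U ` (V <#> L) = carrier (G Mod U)"
        using sum rcos_image_set_mult[OF submod_subset[OF V] submod_subset[OF L]]
        by (simp add: imgL)
      ultimately have "V <#> L = carrier G"
        using rcos_image_eq_carrier_iff VL by (simp add: submod_def)
      then have "L = carrier G"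
        using P L UL by blast
      then show "L' = carrier (G Mod U)"
        using imgL by (simp add: carrier_FactGroup)
    qed
  qed
qed

end

lemma beta_star_iff:
  assumes U: "submod R G sm U" and V: "submod R G sm V"
  shows "beta_star R G sm U V \<longleftrightarrow>
    (\<forall>L. submod R G sm L \<and> U \<subseteq> L \<and> V <#> L = carrier G \<longrightarrow> L = carrier G) \<and>
    (\<forall>L. submod R G sm L \<and> V \<subseteq> L \<and> U <#> L = carrier G \<longrightarrow> L = carrier G)"
  unfolding beta_star_def using small_quot_image_iff[OF U V] small_quot_image_iff[OF V U] by simp

lemma beta_star_set_mult_small:
  assumes C: "submod R G sm C" and D: "submod R G sm D" and A: "small R G sm A"
    and CD: "beta_star R G sm C D"
  shows "beta_star R G sm (C <#> A) D"
proof -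
  have A': "submod R G sm A" using A by (simp add: small_def)
  have CA: "submod R G sm (C <#> A)" using submod_set_mult[OF C A'] .
  have "C \<subseteq> C <#> A"
    using subgroup_subset_set_mult_left A' submod_subset[OF C] by (simp add: submod_def)
  moreover have "L = carrier G"
    if L: "submod R G sm L" "D \<subseteq> L" and sum: "(C <#> A) <#> L = carrier G" for L
  proof -
    have "A <#> (C <#> L) = (C <#> A) <#> L"
      using submod_subset C A' L set_mult_assoc set_mult_comm by metis
    then have "C <#> L = carrier G"
      using A submod_set_mult[OF C L(1)] sum by (simp add: small_def)
    then show ?thesis
      using CD L beta_star_iff[OF C D] by blast
  qed
  ultimately show ?thesis
    using CD unfolding beta_star_iff[OF C D] beta_star_iff[OF CA D] by blast
qed

lemma goldie_star_lifting_imp_principally: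
  "goldie_star_lifting R G sm \<Longrightarrow> principally_goldie_star_lifting R G sm"
  unfolding goldie_star_lifting_def principally_goldie_star_lifting_def
  using cyclic_submod_imp_submod by blast

lemma principally_goldie_star_lifting_imp_goldie_star_lifting:
  assumes decomp: "\<forall>N. submod R G sm N \<longrightarrow>
           (\<exists>C A. cyclic_submod R G sm C \<and> small R G sm A \<and> N = C <#> A)"
    and PG: "principally_goldie_star_lifting R G sm"
  shows "goldie_star_lifting R G sm"
  unfolding goldie_star_lifting_def
proof (intro allI impI)
  fix N assume "submod R G sm N"
  then obtain C A where C: "cyclic_submod R G sm C" and A: "small R G sm A" and N: "N = C <#> A"
    using decomp by blast
  then obtain D where D: "direct_summand R G sm D" "beta_star R G sm C D"
    using PG unfolding principally_goldie_star_lifting_def by blast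
  have "beta_star R G sm N D"
    using beta_star_set_mult_small[OF cyclic_submod_imp_submod[OF C] _ A D(2)] D(1) N
    by (simp add: direct_summand_def)
  then show "\<exists>D. direct_summand R G sm D \<and> beta_star R G sm N D"
    using D(1) by blast
qed

end

theorem proposition3p19:
  fixes R :: "('r, 'c) ring_scheme" and M :: "('b, 'd) monoid_scheme"
    and sm :: "'b \<Rightarrow> 'r \<Rightarrow> 'b"
  assumes "right_module R M sm"
    and "\<forall>N. submod R M sm N \<longrightarrow>
           (\<exists>U A. cyclic_submod R M sm U \<and> small R M sm A \<and> N = U <#>\<^bsub>M\<^esub> A)"
  shows "principally_goldie_star_lifting R M sm \<longleftrightarrow> goldie_star_lifting R M sm"
proof -
  interpret rmodule R M sm
    using assms(1) by (simp add: rmodule_def rmodule_axioms_def right_module_def)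
  show ?thesis
    using goldie_star_lifting_imp_principally
      principally_goldie_star_lifting_imp_goldie_star_lifting[OF assms(2)] by blast
qed

end
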